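(* Assume the setting of the context. Then there is $\epsilon_0>0$ such that for every $\epsilon\in(0,\epsilon_0)$, every $\sigma\in\Sigma$ and every $x\in[0,\infty)$: if $Q^\epsilon_\sigma\cdot x\geq 0$, then $Q^\epsilon_\sigma\cdot x\geq x$.
   Context: Let $(\Sigma,\mathbf{p})$ be a probability space. For each $\sigma\in\Sigma$ and $\epsilon\in[-1,1]$ let real numbers $a_\sigma,b_\sigma$ and $\alpha^\epsilon_\sigma,\beta^\epsilon_\sigma,\gamma^\epsilon_\sigma,\delta^\epsilon_\sigma$ be given, and write $A^\epsilon_\sigma=\begin{pmatrix}\alpha^\epsilon_\sigma&\beta^\epsilon_\sigma\\ \gamma^\epsilon_\sigma&\delta^\epsilon_\sigma\end{pmatrix}$. Assume that for all $\sigma$: $a_\sigma-|b_\sigma|\ge C_1$ and $\|A^\epsilon_\sigma\|\le C_3$ for $|\epsilon|\le1$, with constants $C_1,C_3\in(0,\infty)$. For $x\in\mathbb{R}\cup\{\infty\}$ define the Möbius action $$Q^\epsilon_\sigma\cdot x=\frac{(1+\epsilon^2\alpha^\epsilon_\sigma)x+(a_\sigma-b_\sigma-\epsilon\beta^\epsilon_\sigma)\epsilon}{1+\epsilon^2\delta^\epsilon_\sigma-(a_\sigma+b_\sigma+\epsilon\gamma^\epsilon_\sigma)\epsilon x},$$ i.e. the action of the matrix $\begin{pmatrix}1+\epsilon^2\alpha&(a-b-\epsilon\beta)\epsilon\\-(a+b+\epsilon\gamma)\epsilon&1+\epsilon^2\delta\end{pmatrix}$ on $\mathbb{R}\cup\{\infty\}$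 (with the usual conventions at $\infty$). The energy parameter $\epsilon$ is taken positive. *)

theory Defs
  imports "HOL-Analysis.Analysis" "HOL-Probability.Probability"
begin

definition mat2 :: "real \<Rightarrow> real \<Rightarrow> real \<Rightarrow> real \<Rightarrow> real^2^2" where
  "mat2 m11 m12 m21 m22 = vector [vector [m11, m12], vector [m21, m22]]"

definition mat_norm :: "real^2^2 \<Rightarrow> real" where
  "mat_norm A = onorm (\<lambda>v. A *v v)"

text \<open>Moebius action of the matrix (m11 m12; m21 m22) on a real point x of the
  projective line R \<union> {\<infinity>}: the result is None (= \<infinity>) when the denominator vanishes.\<close>
definition moebius :: "real \<Rightarrow> real \<Rightarrow> real \<Rightarrow> real \<Rightarrow> real \<Rightarrow> real option" where
  "moebius m11 m12 m21 m22 x =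
     (if m21 * x + m22 = 0 then None else Some ((m11 * x + m12) / (m21 * x + m22)))"

definition Q_act :: "real \<Rightarrow> real \<Rightarrow> real \<Rightarrow> real \<Rightarrow> real \<Rightarrow> real \<Rightarrow> real \<Rightarrow> real \<Rightarrow> real option" where
  "Q_act a b \<alpha> \<beta> \<gamma> \<delta> \<epsilon> x =
     moebius (1 + \<epsilon>^2 * \<alpha>) ((a - b - \<epsilon> * \<beta>) * \<epsilon>)
             (- (a + b + \<epsilon> * \<gamma>) * \<epsilon>) (1 + \<epsilon>^2 * \<delta>) x"

end

theory Submission
  imports Defs
begin

text \<open>Write the Moebius map as x \<mapsto> (A x + B) / (D - C x). For small \<epsilon> the coefficients
  B and C are at least m = \<epsilon> (C1 - \<epsilon> C3) > 0, while |A - D| \<le> 2 \<epsilon>^2 C3 \<le> 2 m. Hence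
  C x^2 + (A - D) x + B \<ge> m (|x| - 1)^2 \<ge> 0, i.e. x (D - C x) \<le> A x + B. Since the
  numerator is positive for x \<ge> 0, a nonnegative image forces a positive denominator, and
  dividing by it gives Q x \<ge> x.\<close>

lemma abs_matrix_entry_le_onorm:
  fixes A :: "real^'n^'m"
  shows "\<bar>A $ i $ j\<bar> \<le> onorm (\<lambda>v. A *v v)"
proof -
  have "A $ i $ j = (A *v axis j 1) $ i"
    by (simp add: matrix_vector_mult_basis column_def)
  also have "\<bar>\<dots>\<bar> \<le> norm (A *v axis j 1)"
    by (rule component_le_norm_cart)
  also have "\<dots> \<le> onorm (\<lambda>v. A *v v) * norm (axis j (1::real) :: real^'n)"
    using onorm[of "\<lambda>v. A *v v" "axis j 1"] by simp
  also have "\<dots> = onorm (\<lambda>v. A *v v)"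
    by (simp add: norm_axis_1)
  finally show ?thesis .
qed

lemma abs_mat2_entries_le_mat_norm:
  "\<bar>m11\<bar> \<le> mat_norm (mat2 m11 m12 m21 m22)" "\<bar>m12\<bar> \<le> mat_norm (mat2 m11 m12 m21 m22)"
  "\<bar>m21\<bar> \<le> mat_norm (mat2 m11 m12 m21 m22)" "\<bar>m22\<bar> \<le> mat_norm (mat2 m11 m12 m21 m22)"
  using abs_matrix_entry_le_onorm[of "mat2 m11 m12 m21 m22" 1 1]
    abs_matrix_entry_le_onorm[of "mat2 m11 m12 m21 m22" 1 2]
    abs_matrix_entry_le_onorm[of "mat2 m11 m12 m21 m22" 2 1]
    abs_matrix_entry_le_onorm[of "mat2 m11 m12 m21 m22" 2 2]
  by (simp_all add: mat2_def mat_norm_def)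

lemma moebius_ge_self:
  assumes y: "moebius m11 m12 m21 m22 x = Some y" "0 \<le> y"
    and num_pos: "0 < m11 * x + m12"
    and quad: "x * (m21 * x + m22) \<le> m11 * x + m12"
  shows "x \<le> y"
proof -
  have den: "m21 * x + m22 \<noteq> 0" and y_eq: "y = (m11 * x + m12) / (m21 * x + m22)"
    using y(1) by (auto simp: moebius_def split: if_splits)
  have "0 < m21 * x + m22"
  proof (rule ccontr)
    assume "\<not> ?thesis"
    with den have "m21 * x + m22 < 0" by linarith
    with num_pos y_eq have "y < 0" by (simp add: divide_pos_neg)
    with y(2) show False by simp
  qed
  with quad show ?thesis
    by (simp add: y_eq le_divide_eq)
qed

lemma quadratic_nonneg_of_dominant_coeffs:
  fixes m B C E x :: real
  assumes "m \<le> B" "m \<le> C" "\<bar>E\<bar> \<le> 2 * m"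
  shows "0 \<le> C * x\<^sup>2 + E * x + B"
proof -
  have "0 \<le> m"
    using assms(3) abs_ge_zero[of E] by linarith
  then have "0 \<le> m * (\<bar>x\<bar> - 1)\<^sup>2"
    by simp
  also have "\<dots> = m * x\<^sup>2 - 2 * m * \<bar>x\<bar> + m"
    by (simp add: power2_eq_square algebra_simps)
  also have "\<dots> \<le> C * x\<^sup>2 + E * x + B"
  proof -
    have "m * x\<^sup>2 \<le> C * x\<^sup>2" using assms(2) by (simp add: mult_right_mono)
    moreover have "- (2 * m * \<bar>x\<bar>) \<le> E * x"
      using mult_right_mono[OF assms(3) abs_ge_zero[of x]] abs_ge_minus_self[of "E * x"]
      by (simp add: abs_mult)
    ultimately show ?thesis using assms(1) by linarith
  qed
  finally show ?thesis .
qed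

lemma Q_act_ge_self:
  fixes a b \<alpha> \<beta> \<gamma> \<delta> \<epsilon> x y C1 C3 :: real
  assumes ab: "C1 \<le> a - \<bar>b\<bar>"
    and bounds: "\<bar>\<alpha>\<bar> \<le> C3" "\<bar>\<beta>\<bar> \<le> C3" "\<bar>\<gamma>\<bar> \<le> C3" "\<bar>\<delta>\<bar> \<le> C3"
    and \<epsilon>: "0 < \<epsilon>" "2 * \<epsilon> * C3 < C1" "\<epsilon>\<^sup>2 * C3 \<le> 1"
    and x: "0 \<le> x"
    and y: "Q_act a b \<alpha> \<beta> \<gamma> \<delta> \<epsilon> x = Some y" "0 \<le> y"
  shows "x \<le> y"
proof -
  define A B C D where "A = 1 + \<epsilon>\<^sup>2 * \<alpha>" and "B = (a - b - \<epsilon> * \<beta>) * \<epsilon>"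
    and "C = (a + b + \<epsilon> * \<gamma>) * \<epsilon>" and "D = 1 + \<epsilon>\<^sup>2 * \<delta>"
  define m where "m = \<epsilon> * (C1 - \<epsilon> * C3)"
  have \<epsilon>_abs: "\<bar>\<epsilon> * t\<bar> \<le> \<epsilon> * c" if "\<bar>t\<bar> \<le> c" for t c
    using that \<epsilon>(1) by (simp add: abs_mult)
  have "m \<le> B"
    using \<epsilon>_abs[OF bounds(2)] ab \<epsilon>(1) by (simp add: m_def B_def mult.commute mult_left_mono)
  moreover have "m \<le> C"
    using \<epsilon>_abs[OF bounds(3)] ab \<epsilon>(1) by (simp add: m_def C_def mult.commute mult_left_mono)
  moreover have "\<bar>A - D\<bar> \<le> 2 * m"
  proof -
    have "A - D = \<epsilon> * (\<epsilon> * (\<alpha> - \<delta>))"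
      by (simp add: A_def D_def power2_eq_square algebra_simps)
    then have "\<bar>A - D\<bar> = \<epsilon> * \<bar>\<epsilon> * (\<alpha> - \<delta>)\<bar>"
      using \<epsilon>(1) by (simp add: abs_mult)
    also have "\<dots> \<le> \<epsilon> * (\<epsilon> * (2 * C3))"
      using \<epsilon>_abs[of "\<alpha> - \<delta>" "2 * C3"] bounds(1,4) \<epsilon>(1) by (simp add: mult_left_mono)
    also have "\<dots> \<le> 2 * m"
      using \<epsilon> by (simp add: m_def algebra_simps)
    finally show ?thesis .
  qed
  ultimately have quad: "0 \<le> C * x\<^sup>2 + (A - D) * x + B"
    by (rule quadratic_nonneg_of_dominant_coeffs)
  have "0 < m"
  proof -
    have "0 \<le> \<epsilon> * C3"
      using \<epsilon>(1) bounds(1) by simp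
    with \<epsilon>(1,2) show ?thesis
      by (simp add: m_def)
  qed
  moreover have "0 \<le> A"
  proof -
    have "\<bar>\<epsilon>\<^sup>2 * \<alpha>\<bar> \<le> \<epsilon>\<^sup>2 * C3"
      using bounds(1) by (simp add: abs_mult mult_left_mono)
    with \<epsilon>(3) show ?thesis
      by (simp add: A_def abs_le_iff)
  qed
  ultimately have "0 < A * x + B"
    using \<open>m \<le> B\<close> mult_nonneg_nonneg[OF _ x, of A] by linarith
  moreover have "Q_act a b \<alpha> \<beta> \<gamma> \<delta> \<epsilon> x = moebius A B (- C) D x"
    by (simp add: Q_act_def A_def B_def C_def D_def algebra_simps)
  ultimately show ?thesis
    using moebius_ge_self[of A B "- C" D x y] y quad by (simp add: power2_eq_square algebra_simps)
qed

theorem lemma1: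
  fixes p :: "'s measure"
    and a b :: "'s \<Rightarrow> real"
    and \<alpha> \<beta> \<gamma> \<delta> :: "real \<Rightarrow> 's \<Rightarrow> real"
    and C1 C3 :: real
  assumes "prob_space p"
    and "C1 > 0" and "C3 > 0"
    and "\<And>\<sigma>. \<sigma> \<in> space p \<Longrightarrow> a \<sigma> - \<bar>b \<sigma>\<bar> \<ge> C1"
    and "\<And>\<sigma> \<epsilon>. \<sigma> \<in> space p \<Longrightarrow> \<bar>\<epsilon>\<bar> \<le> 1 \<Longrightarrow>
           mat_norm (mat2 (\<alpha> \<epsilon> \<sigma>) (\<beta> \<epsilon> \<sigma>) (\<gamma> \<epsilon> \<sigma>) (\<delta> \<epsilon> \<sigma>)) \<le> C3"
  shows "\<exists>\<epsilon>0 > 0. \<forall>\<epsilon> \<in> {0<..<\<epsilon>0}. \<forall>\<sigma> \<in> space p. \<forall>x \<ge> 0. \<forall>y.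
           Q_act (a \<sigma>) (b \<sigma>) (\<alpha> \<epsilon> \<sigma>) (\<beta> \<epsilon> \<sigma>) (\<gamma> \<epsilon> \<sigma>) (\<delta> \<epsilon> \<sigma>) \<epsilon> x = Some y
           \<longrightarrow> y \<ge> 0 \<longrightarrow> y \<ge> x"
proof (intro exI[of _ "min 1 (min (C1 / (2 * C3)) (1 / C3))"] conjI ballI allI impI)
  show "0 < min 1 (min (C1 / (2 * C3)) (1 / C3))"
    using assms(2,3) by simp
next
  fix \<epsilon> \<sigma> x y
  assume \<epsilon>: "\<epsilon> \<in> {0<..<min 1 (min (C1 / (2 * C3)) (1 / C3))}" and \<sigma>: "\<sigma> \<in> space p"
    and x: "0 \<le> x" and y: "Q_act (a \<sigma>) (b \<sigma>) (\<alpha> \<epsilon> \<sigma>) (\<beta> \<epsilon> \<sigma>) (\<gamma> \<epsilon> \<sigma>) (\<delta> \<epsilon> \<sigma>) \<epsilon> x = Some y" "0 \<le> y"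
  have norm_le: "mat_norm (mat2 (\<alpha> \<epsilon> \<sigma>) (\<beta> \<epsilon> \<sigma>) (\<gamma> \<epsilon> \<sigma>) (\<delta> \<epsilon> \<sigma>)) \<le> C3"
    using assms(5)[OF \<sigma>] \<epsilon> by simp
  have "2 * \<epsilon> * C3 < C1" "\<epsilon> * C3 < 1"
    using \<epsilon> assms(3) by (simp_all add: field_simps)
  moreover have "\<epsilon>\<^sup>2 * C3 \<le> \<epsilon> * C3"
    using \<epsilon> assms(3) by (simp add: power2_eq_square)
  ultimately have "\<epsilon>\<^sup>2 * C3 \<le> 1"
    by linarith
  with \<epsilon> \<open>2 * \<epsilon> * C3 < C1\<close> show "x \<le> y"
    using Q_act_ge_self[OF assms(4)[OF \<sigma>] abs_mat2_entries_le_mat_norm[THEN order_trans, OF norm_le]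
        _ _ _ x y] by simp
qed

end
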